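(* Let $\Phi_1,\Phi_2$ be two convex growth functions. Assume that $\Phi_2\in \mathscr{U}^q$ and that $\frac{\Phi_2}{\Phi_1}$ is nondecreasing. Then the function $\Phi_3$ defined by $\Phi_3(0)=0$ and $\Phi_3(t)=\dfrac{1}{\Phi_2\circ\Phi_1^{-1}\left(\frac 1t\right)}$ for $t>0$ belongs to the class $\mathscr{U}$.
   Context: A growth function is a continuous nondecreasing function from $[0,\infty)$ onto $[0,\infty)$; $\Phi^{-1}$ is its inverse. $\Phi$ is of upper type $q$ if there is $C>0$ with $\Phi(st)\le Ct^q\Phi(s)$ for all $s>0$, $t\ge1$. $\mathscr{U}^q$ ($q\ge1$) is the set of growth functions of upper type $q$ with $t\mapsto\Phi(t)/t$ nondecreasing, and $\mathscr{U}=\bigcup_{q\ge1}\mathscr{U}^q$. *)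

theory Defs
  imports "HOL-Analysis.Analysis"
begin

text \<open>Growth function: continuous nondecreasing function from [0,\<infinity>) onto [0,\<infinity>).
  Functions are modelled as real \<Rightarrow> real; values at negative arguments are irrelevant.\<close>
definition growth_function :: "(real \<Rightarrow> real) \<Rightarrow> bool" where
  "growth_function \<Phi> \<longleftrightarrow>
     continuous_on {0..} \<Phi> \<and> mono_on {0..} \<Phi> \<and> \<Phi> ` {0..} = {0..}"

text \<open>Inverse of a growth function (on [0,\<infinity>)).  For a convex growth function it is
  uniquely determined at every positive argument.\<close>
definition gf_inv :: "(real \<Rightarrow> real) \<Rightarrow> real \<Rightarrow> real" where
  "gf_inv \<Phi> = inv_into {0..} \<Phi>"

definition upper_type :: "real \<Rightarrow> (real \<Rightarrow> real) \<Rightarrow> bool" where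
  "upper_type q \<Phi> \<longleftrightarrow>
     (\<exists>C>0. \<forall>s>0. \<forall>t\<ge>1. \<Phi> (s * t) \<le> C * t powr q * \<Phi> s)"

definition class_U_q :: "real \<Rightarrow> (real \<Rightarrow> real) set" where
  "class_U_q q = {\<Phi>. growth_function \<Phi> \<and> upper_type q \<Phi> \<and>
                     mono_on {0<..} (\<lambda>t. \<Phi> t / t)}"

definition class_U :: "(real \<Rightarrow> real) set" where
  "class_U = (\<Union>q\<in>{1..}. class_U_q q)"

end

theory Submission
  imports Defs
begin

text \<open>The function in question is \<open>t \<mapsto> 1 / \<psi> (1 / t)\<close> for \<open>\<psi> = \<Phi>2 \<circ> \<Phi>1\<inverse>\<close>, and this
  conjugation by \<open>t \<mapsto> 1 / t\<close> preserves \<open>\<U>\<^sup>q\<close>: the upper type bound transfers verbatim, and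
  the quotient \<open>\<Phi>3(t) / t\<close> is the reciprocal of \<open>\<psi>(u) / u\<close> at \<open>u = 1 / t\<close>.  So it suffices
  that \<open>\<psi> \<in> \<U>\<^sup>q\<close>.  Convexity of \<open>\<Phi>1\<close> with \<open>\<Phi>1(0) = 0\<close> gives \<open>\<Phi>1\<inverse>(u t) \<le> t \<Phi>1\<inverse>(u)\<close> for
  \<open>t \<ge> 1\<close>, so \<open>\<psi>\<close> inherits upper type \<open>q\<close> from \<open>\<Phi>2\<close>; and \<open>\<psi>(u) / u = \<Phi>2(s) / \<Phi>1(s)\<close> at
  \<open>s = \<Phi>1\<inverse>(u)\<close>, which is nondecreasing in \<open>u\<close>.\<close>

lemma gf_nonneg: "growth_function f \<Longrightarrow> 0 \<le> x \<Longrightarrow> 0 \<le> f x"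
  unfolding growth_function_def by blast

lemma gf_mono: "growth_function f \<Longrightarrow> 0 \<le> x \<Longrightarrow> x \<le> y \<Longrightarrow> f x \<le> f y"
  unfolding growth_function_def by (auto intro: mono_onD)

lemma gf_less_imp_less: "growth_function f \<Longrightarrow> 0 \<le> y \<Longrightarrow> f x < f y \<Longrightarrow> x < y"
  using gf_mono[of f y x] by fastforce

lemma gf_surj:
  assumes "growth_function f" "0 \<le> y"
  obtains x where "0 \<le> x" "f x = y"
  using assms unfolding growth_function_def by (metis atLeast_iff imageE)

lemma gf_zero:
  assumes "growth_function f"
  shows "f 0 = 0"
proof -
  obtain x where "0 \<le> x" "f x = 0"
    using gf_surj[OF assms, of 0] by auto
  then show ?thesis
    using gf_mono[OF assms, of 0 x] gf_nonneg[OF assms, of 0] by auto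
qed

text \<open>Monotonicity and surjectivity already force continuity: extended by the identity
  on the negative axis, \<open>f\<close> becomes a monotone map of \<open>\<real>\<close> onto \<open>\<real>\<close>.\<close>
lemma growth_functionI:
  assumes mono: "mono_on {0..} f" and onto: "f ` {0..} = {0..}"
  shows "growth_function f"
proof -
  define g where "g x = (if 0 \<le> x then f x else x)" for x :: real
  have "g x \<le> g y" if "x \<le> y" for x y
  proof -
    have "0 \<le> f y" if "0 \<le> y"
      using onto that by auto
    then show ?thesis
      using \<open>x \<le> y\<close> mono_onD[OF mono, of x y] unfolding g_def by auto
  qed
  moreover have "range g = UNIV"
  proof -
    have "y \<in> range g" for y
    proof (cases "0 \<le> y")
      case True
      then obtain x where "0 \<le> x" "y = f x"
        using onto by (metis atLeast_iff imageE)
      then have "y = g x"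
        by (simp add: g_def)
      then show ?thesis
        by blast
    next
      case False
      then have "y = g y"
        by (simp add: g_def)
      then show ?thesis
        by blast
    qed
    then show ?thesis by blast
  qed
  ultimately have "continuous_on UNIV g"
    by (intro continuous_onI_mono) auto
  then have "continuous_on {0..} f"
    by (rule continuous_on_subset[THEN continuous_on_cong[THEN iffD1, rotated 2]])
       (auto simp: g_def)
  then show ?thesis
    using mono onto unfolding growth_function_def by blast
qed

lemma growth_function_comp:
  assumes f: "growth_function f" and g: "growth_function g"
  shows "growth_function (f \<circ> g)"
proof (rule growth_functionI)
  show "mono_on {0..} (f \<circ> g)"
    by (intro mono_onI) (simp add: f g gf_mono gf_nonneg)
  show "(f \<circ> g) ` {0..} = {0..}"
    using f g unfolding growth_function_def by (metis image_comp)
qed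

lemma upper_type_gf_pos:
  assumes f: "growth_function f" and "upper_type q f" "0 < s"
  shows "0 < f s"
proof (rule ccontr)
  assume "\<not> 0 < f s"
  then have fs: "f s = 0"
    using gf_nonneg[OF f, of s] \<open>0 < s\<close> by auto
  obtain C where C: "\<And>s t. 0 < s \<Longrightarrow> 1 \<le> t \<Longrightarrow> f (s * t) \<le> C * t powr q * f s"
    using assms(2) unfolding upper_type_def by blast
  obtain x where "0 \<le> x" "f x = 1"
    using gf_surj[OF f, of 1] by auto
  moreover have "s < x"
    using gf_less_imp_less[OF f, of x s] \<open>f x = 1\<close> fs \<open>0 \<le> x\<close> by linarith
  ultimately show False
    using C[of s "x / s"] fs \<open>0 < s\<close> by simp
qed

text \<open>With \<open>x / 0 = 0\<close> the ratio \<open>g / f\<close> vanishes on the zero set of \<open>f\<close>, so monotonicity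
  of the ratio rules out zeros of \<open>f\<close> at \<open>s > 0\<close>: just to the right of them \<open>f\<close> is
  arbitrarily small while \<open>g\<close> stays above \<open>g s > 0\<close>.\<close>
lemma ratio_mono_imp_gf_pos:
  assumes f: "growth_function f" and g: "growth_function g"
    and g_pos: "\<And>s. 0 < s \<Longrightarrow> 0 < g s"
    and ratio: "mono_on {0<..} (\<lambda>t. g t / f t)" and "0 < s"
  shows "0 < f s"
proof (rule ccontr)
  assume "\<not> 0 < f s"
  then have fs: "f s = 0"
    using gf_nonneg[OF f, of s] \<open>0 < s\<close> by auto
  obtain b where b: "0 \<le> b" "f b = 1"
    using gf_surj[OF f, of 1] by auto
  have "s < b"
    using gf_less_imp_less[OF f, of b s] b fs \<open>0 < s\<close> by simp
  define e where "e = g s / (g s + g b)"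
  have "0 < g s" "0 < g b"
    using g_pos \<open>0 < s\<close> \<open>s < b\<close> by auto
  then have e: "0 < e" "e < 1" "e * g b < g s"
    unfolding e_def by (auto simp: field_simps)
  obtain x where x: "0 \<le> x" "f x = e"
    using gf_surj[OF f, of e] e by auto
  have "s < x"
    using gf_less_imp_less[OF f, of x s] x e fs by simp
  moreover have "x < b"
    using gf_less_imp_less[OF f, of b x] x e b by simp
  ultimately have "g x / e \<le> g b"
    using mono_onD[OF ratio, of x b] x b \<open>0 < s\<close> by simp
  then have "g x < g s"
    using e by (simp add: divide_le_eq mult.commute)
  then show False
    using gf_mono[OF g, of s x] \<open>0 < s\<close> \<open>s < x\<close> by simp
qed

lemma convex_on_superhomogeneous:
  fixes f :: "real \<Rightarrow> real"
  assumes "convex_on {0..} f" "f 0 \<le> 0" "0 \<le> x" "1 \<le> t"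
  shows "t * f x \<le> f (t * x)"
proof -
  have "f ((1 - 1/t) *\<^sub>R 0 + (1/t) *\<^sub>R (t * x)) \<le> (1 - 1/t) * f 0 + (1/t) * f (t * x)"
    using assms by (intro convex_onD[OF assms(1)]) auto
  moreover have "(1 - 1/t) * f 0 \<le> 0"
    using assms by (simp add: mult_nonneg_nonpos)
  ultimately have "f x \<le> f (t * x) / t"
    using assms by simp
  then show ?thesis
    using assms by (simp add: field_simps)
qed

lemma convex_gf_strict_mono:
  assumes f: "growth_function f" and "convex_on {0..} f" and f_pos: "\<And>s. 0 < s \<Longrightarrow> 0 < f s"
  shows "strict_mono_on {0..} f"
proof (rule strict_mono_onI)
  fix x y :: real
  assume "x \<in> {0..}" "x < y"
  show "f x < f y"
  proof (cases "x = 0")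
    case True
    then show ?thesis
      using gf_zero[OF f] f_pos \<open>x < y\<close> by simp
  next
    case False
    then have "0 < x"
      using \<open>x \<in> {0..}\<close> by simp
    then have "f x < (y / x) * f x"
      using mult_strict_right_mono[of 1 "y / x" "f x"] f_pos[of x] \<open>x < y\<close> by simp
    also have "\<dots> \<le> f ((y / x) * x)"
      using \<open>0 < x\<close> \<open>x < y\<close> gf_zero[OF f]
      by (intro convex_on_superhomogeneous[OF assms(2)]) auto
    finally show ?thesis
      using \<open>0 < x\<close> by simp
  qed
qed

lemma gf_gf_inv:
  assumes "growth_function f" "0 \<le> y"
  shows "f (gf_inv f y) = y" and "0 \<le> gf_inv f y"
proof -
  have "y \<in> f ` {0..}"
    using assms unfolding growth_function_def by simp
  then show "f (gf_inv f y) = y" "0 \<le> gf_inv f y"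
    unfolding gf_inv_def using inv_into_into[of y f "{0..}"] f_inv_into_f[of y f "{0..}"] by auto
qed

lemma gf_inv_gf: "strict_mono_on {0..} f \<Longrightarrow> 0 \<le> x \<Longrightarrow> gf_inv f (f x) = x"
  unfolding gf_inv_def by (rule inv_into_f_f[OF strict_mono_on_imp_inj_on]) auto

lemma gf_inv_pos: "growth_function f \<Longrightarrow> 0 < y \<Longrightarrow> 0 < gf_inv f y"
  using gf_gf_inv[of f y] gf_zero[of f] by (metis less_eq_real_def)

lemma growth_function_gf_inv:
  assumes f: "growth_function f" and smono: "strict_mono_on {0..} f"
  shows "growth_function (gf_inv f)"
proof (rule growth_functionI)
  show "mono_on {0..} (gf_inv f)"
  proof (rule mono_onI)
    fix y y' :: real
    assume "y \<in> {0..}" "y' \<in> {0..}" "y \<le> y'"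
    then show "gf_inv f y \<le> gf_inv f y'"
      using strict_mono_on_less_eq[OF smono] gf_gf_inv[OF f] by (metis atLeast_iff)
  qed
  show "gf_inv f ` {0..} = {0..}"
  proof
    show "gf_inv f ` {0..} \<subseteq> {0..}"
      using gf_gf_inv(2)[OF f] by auto
    show "{0..} \<subseteq> gf_inv f ` {0..}"
      using gf_inv_gf[OF smono] gf_nonneg[OF f] by (metis atLeast_iff image_eqI subsetI)
  qed
qed

lemma gf_inv_subhomogeneous:
  assumes f: "growth_function f" and "convex_on {0..} f" and smono: "strict_mono_on {0..} f"
    and "0 \<le> u" "1 \<le> t"
  shows "gf_inv f (u * t) \<le> gf_inv f u * t"
proof -
  define w where "w = gf_inv f u"
  have w: "0 \<le> w" "f w = u"
    using gf_gf_inv[OF f \<open>0 \<le> u\<close>] unfolding w_def by auto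
  have "f (gf_inv f (u * t)) = t * f w"
    using gf_gf_inv[OF f, of "u * t"] w \<open>0 \<le> u\<close> \<open>1 \<le> t\<close> by simp
  also have "\<dots> \<le> f (t * w)"
    using w \<open>1 \<le> t\<close> gf_zero[OF f]
    by (intro convex_on_superhomogeneous[OF assms(2)]) auto
  finally show ?thesis
    using strict_mono_on_less_eq[OF smono] gf_gf_inv(2)[OF f, of "u * t"] w \<open>0 \<le> u\<close> \<open>1 \<le> t\<close>
    unfolding w_def by (simp add: mult.commute)
qed

lemma upper_type_comp:
  assumes "upper_type q f" and f: "growth_function f"
    and g_pos: "\<And>s. 0 < s \<Longrightarrow> 0 < g s"
    and g_sub: "\<And>s t. 0 < s \<Longrightarrow> 1 \<le> t \<Longrightarrow> g (s * t) \<le> g s * t"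
  shows "upper_type q (f \<circ> g)"
proof -
  obtain C where "0 < C" and C: "\<And>s t. 0 < s \<Longrightarrow> 1 \<le> t \<Longrightarrow> f (s * t) \<le> C * t powr q * f s"
    using assms(1) unfolding upper_type_def by blast
  have "f (g (s * t)) \<le> C * t powr q * f (g s)" if "0 < s" "1 \<le> t" for s t
  proof -
    have "f (g (s * t)) \<le> f (g s * t)"
      using g_pos[of "s * t"] g_sub[OF that] that by (intro gf_mono[OF f]) auto
    also have "\<dots> \<le> C * t powr q * f (g s)"
      using C g_pos that by simp
    finally show ?thesis .
  qed
  then show ?thesis
    using \<open>0 < C\<close> unfolding upper_type_def by auto
qed

lemma mono_on_ratio_comp_gf_inv:
  assumes f: "growth_function f" and smono: "strict_mono_on {0..} f"
    and ratio: "mono_on {0<..} (\<lambda>t. g t / f t)"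
  shows "mono_on {0<..} (\<lambda>u. (g \<circ> gf_inv f) u / u)"
proof (rule mono_onI)
  fix u v :: real
  assume "u \<in> {0<..}" "v \<in> {0<..}" "u \<le> v"
  moreover have "gf_inv f u \<le> gf_inv f v"
    using growth_function_gf_inv[OF f smono] \<open>u \<le> v\<close> \<open>u \<in> {0<..}\<close> by (simp add: gf_mono)
  ultimately have "g (gf_inv f u) / f (gf_inv f u) \<le> g (gf_inv f v) / f (gf_inv f v)"
    using gf_inv_pos[OF f] by (intro mono_onD[OF ratio]) auto
  then show "(g \<circ> gf_inv f) u / u \<le> (g \<circ> gf_inv f) v / v"
    using gf_gf_inv(1)[OF f] \<open>u \<in> {0<..}\<close> \<open>v \<in> {0<..}\<close> by simp
qed

definition reciprocal_conj :: "(real \<Rightarrow> real) \<Rightarrow> real \<Rightarrow> real" where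
  "reciprocal_conj \<psi> t = (if t \<le> 0 then 0 else 1 / \<psi> (1 / t))"

lemma growth_function_reciprocal_conj:
  assumes \<psi>: "growth_function \<psi>" and \<psi>_pos: "\<And>s. 0 < s \<Longrightarrow> 0 < \<psi> s"
  shows "growth_function (reciprocal_conj \<psi>)"
proof (rule growth_functionI)
  show "mono_on {0..} (reciprocal_conj \<psi>)"
  proof (rule mono_onI)
    fix s t :: real
    assume "s \<in> {0..}" "t \<in> {0..}" "s \<le> t"
    show "reciprocal_conj \<psi> s \<le> reciprocal_conj \<psi> t"
    proof (cases "s = 0")
      case True
      then show ?thesis
        using gf_nonneg[OF \<psi>, of "1 / t"] \<open>t \<in> {0..}\<close> unfolding reciprocal_conj_def by simp
    next
      case False
      then have "0 < s"
        using \<open>s \<in> {0..}\<close> by simp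
      then have "\<psi> (1 / t) \<le> \<psi> (1 / s)"
        using \<open>s \<le> t\<close> by (intro gf_mono[OF \<psi>]) (auto simp: frac_le)
      then show ?thesis
        using \<open>0 < s\<close> \<open>s \<le> t\<close> \<psi>_pos[of "1 / t"] unfolding reciprocal_conj_def
        by (simp add: frac_le)
    qed
  qed
  show "reciprocal_conj \<psi> ` {0..} = {0..}"
  proof
    show "reciprocal_conj \<psi> ` {0..} \<subseteq> {0..}"
      using \<psi>_pos unfolding reciprocal_conj_def by (auto simp: less_imp_le)
    show "{0..} \<subseteq> reciprocal_conj \<psi> ` {0..}"
    proof
      fix y :: real
      assume "y \<in> {0..}"
      show "y \<in> reciprocal_conj \<psi> ` {0..}"
      proof (cases "y = 0")
        case True
        then show ?thesis
          unfolding reciprocal_conj_def by (auto intro!: image_eqI[of _ _ 0])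
      next
        case False
        then have "0 < y"
          using \<open>y \<in> {0..}\<close> by simp
        then obtain x where "0 \<le> x" "\<psi> x = 1 / y"
          using gf_surj[OF \<psi>, of "1 / y"] by auto
        then have "0 < x"
          using gf_zero[OF \<psi>] \<open>0 < y\<close> by (metis less_eq_real_def zero_less_divide_1_iff)
        then have "reciprocal_conj \<psi> (1 / x) = y"
          using \<open>\<psi> x = 1 / y\<close> unfolding reciprocal_conj_def by simp
        then show ?thesis
          using \<open>0 < x\<close> by (auto intro!: image_eqI[of _ _ "1 / x"])
      qed
    qed
  qed
qed

lemma upper_type_reciprocal_conj:
  assumes "upper_type q \<psi>" and \<psi>_pos: "\<And>s. 0 < s \<Longrightarrow> 0 < \<psi> s"
  shows "upper_type q (reciprocal_conj \<psi>)"
proof -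
  obtain C where "0 < C" and C: "\<And>s t. 0 < s \<Longrightarrow> 1 \<le> t \<Longrightarrow> \<psi> (s * t) \<le> C * t powr q * \<psi> s"
    using assms(1) unfolding upper_type_def by blast
  have "reciprocal_conj \<psi> (s * t) \<le> C * t powr q * reciprocal_conj \<psi> s" if "0 < s" "1 \<le> t" for s t
  proof -
    have "\<psi> (1 / s) \<le> C * t powr q * \<psi> (1 / (s * t))"
      using C[of "1 / (s * t)" t] that by simp
    then have "1 / \<psi> (1 / (s * t)) \<le> C * t powr q / \<psi> (1 / s)"
      using \<psi>_pos[of "1 / s"] \<psi>_pos[of "1 / (s * t)"] that
      by (simp add: field_simps)
    moreover have "\<not> s * t \<le> 0"
      using that by (simp add: not_le)
    ultimately show ?thesis
      using that unfolding reciprocal_conj_def by simp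
  qed
  then show ?thesis
    using \<open>0 < C\<close> unfolding upper_type_def by auto
qed

lemma mono_on_ratio_reciprocal_conj:
  assumes ratio: "mono_on {0<..} (\<lambda>s. \<psi> s / s)" and \<psi>_pos: "\<And>s. 0 < s \<Longrightarrow> 0 < \<psi> s"
  shows "mono_on {0<..} (\<lambda>t. reciprocal_conj \<psi> t / t)"
proof (rule mono_onI)
  fix a b :: real
  assume "a \<in> {0<..}" "b \<in> {0<..}" "a \<le> b"
  then have "\<psi> (1 / b) / (1 / b) \<le> \<psi> (1 / a) / (1 / a)"
    by (intro mono_onD[OF ratio]) (auto simp: frac_le)
  then have "inverse (\<psi> (1 / a) / (1 / a)) \<le> inverse (\<psi> (1 / b) / (1 / b))"
    using \<psi>_pos \<open>b \<in> {0<..}\<close> by (intro le_imp_inverse_le) auto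
  then show "reciprocal_conj \<psi> a / a \<le> reciprocal_conj \<psi> b / b"
    using \<open>a \<in> {0<..}\<close> \<open>b \<in> {0<..}\<close> unfolding reciprocal_conj_def by (simp add: field_simps)
qed

lemma reciprocal_conj_class_U_q:
  assumes "\<psi> \<in> class_U_q q"
  shows "reciprocal_conj \<psi> \<in> class_U_q q"
proof -
  have \<psi>_pos: "0 < \<psi> s" if "0 < s" for s
    using assms that upper_type_gf_pos unfolding class_U_q_def by blast
  then show ?thesis
    using assms growth_function_reciprocal_conj upper_type_reciprocal_conj
      mono_on_ratio_reciprocal_conj
    unfolding class_U_q_def by blast
qed

lemma comp_gf_inv_class_U_q:
  assumes \<Phi>1: "growth_function \<Phi>1" and "convex_on {0..} \<Phi>1"
    and \<Phi>2: "\<Phi>2 \<in> class_U_q q" and ratio: "mono_on {0<..} (\<lambda>t. \<Phi>2 t / \<Phi>1 t)"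
  shows "\<Phi>2 \<circ> gf_inv \<Phi>1 \<in> class_U_q q"
proof -
  have gf2: "growth_function \<Phi>2" and upper: "upper_type q \<Phi>2"
    using \<Phi>2 unfolding class_U_q_def by auto
  have \<Phi>2_pos: "0 < \<Phi>2 s" if "0 < s" for s
    using upper_type_gf_pos[OF gf2 upper that] .
  have "0 < \<Phi>1 s" if "0 < s" for s
    using ratio_mono_imp_gf_pos[OF \<Phi>1 gf2 \<Phi>2_pos ratio that] .
  then have smono: "strict_mono_on {0..} \<Phi>1"
    using convex_gf_strict_mono[OF \<Phi>1 assms(2)] by blast
  have "growth_function (\<Phi>2 \<circ> gf_inv \<Phi>1)"
    using growth_function_comp[OF gf2 growth_function_gf_inv[OF \<Phi>1 smono]] .
  moreover have "upper_type q (\<Phi>2 \<circ> gf_inv \<Phi>1)"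
    using gf_inv_pos[OF \<Phi>1] gf_inv_subhomogeneous[OF \<Phi>1 assms(2) smono]
    by (intro upper_type_comp[OF upper gf2]) auto
  moreover have "mono_on {0<..} (\<lambda>u. (\<Phi>2 \<circ> gf_inv \<Phi>1) u / u)"
    using mono_on_ratio_comp_gf_inv[OF \<Phi>1 smono ratio] .
  ultimately show ?thesis
    unfolding class_U_q_def by blast
qed

theorem lemma3p2:
  fixes \<Phi>1 \<Phi>2 :: "real \<Rightarrow> real" and q :: real
  assumes "growth_function \<Phi>1" and "convex_on {0..} \<Phi>1"
    and "growth_function \<Phi>2" and "convex_on {0..} \<Phi>2"
    and "q \<ge> 1" and "\<Phi>2 \<in> class_U_q q"
    and "mono_on {0<..} (\<lambda>t. \<Phi>2 t / \<Phi>1 t)"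
  shows "(\<lambda>t. if t \<le> 0 then 0 else 1 / \<Phi>2 (gf_inv \<Phi>1 (1 / t))) \<in> class_U"
proof -
  have "reciprocal_conj (\<Phi>2 \<circ> gf_inv \<Phi>1) \<in> class_U_q q"
    using comp_gf_inv_class_U_q[OF assms(1,2,6,7)] by (rule reciprocal_conj_class_U_q)
  then show ?thesis
    using \<open>q \<ge> 1\<close> unfolding class_U_def reciprocal_conj_def[abs_def] comp_def by auto
qed

end
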